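(* Lebesgue-almost everywhere, \[ \lim_{n\to\infty}\frac{\sum_{k=1}^n\mathsf a'_k}{\sum_{k=1}^n\mathsf a_k}=0 . \]
   Context: $I=(0,1]$, $\mathsf a_n(x)$ denotes the $n$-th continued fraction digit of $x\in I$. $\mathbb P$ is the set of primes. The prime digits are $\mathsf a'_n(x):=\mathsf a_n(x)$ if $\mathsf a_n(x)\in\mathbb P$ and $\mathsf a'_n(x):=0$ otherwise. *)

theory Defs
  imports "HOL-Analysis.Analysis" "HOL-Computational_Algebra.Primes"
begin

text \<open>Gauss map on [0,1]: T x = frac (1/x) for x > 0, and T 0 = 0 (digits after
termination of a rational expansion are 0; this only matters on a null set).\<close>
definition gauss_map :: "real \<Rightarrow> real" where
  "gauss_map x = (if x = 0 then 0 else frac (1 / x))"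

definition cf_digit :: "nat \<Rightarrow> real \<Rightarrow> nat" where
  "cf_digit n x = nat \<lfloor>1 / (gauss_map ^^ (n - 1)) x\<rfloor>"

definition prime_cf_digit :: "nat \<Rightarrow> real \<Rightarrow> nat" where
  "prime_cf_digit n x = (if prime (cf_digit n x) then cf_digit n x else 0)"

end

theory Submission
  imports Defs "HOL-Real_Asymp.Real_Asymp"
begin

text \<open>The Gauss measure has density \<open>1/((1+x) ln 2)\<close>, comparable to Lebesgue measure on
  \<open>(0,1)\<close>, and its transfer operator has the explicit kernel \<open>1/((k+y)(k+1+y))\<close> on the branch
  with digit \<open>k\<close>. Iterating it, the integral of \<open>\<Prod>i<n. h\<^sub>i (a\<^sub>i\<^sub>+\<^sub>1)\<close> is at most
  \<open>\<Prod>i<n. c\<^sub>i\<close> whenever \<open>\<Sum>k. h\<^sub>i k / ((k+y)(k+1+y)) \<le> c\<^sub>i / (1+y)\<close>, which gives exponential Markov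
  inequalities for the digits. On the first \<open>2^(j+1)\<close> digits, with \<open>L = 2^(j-9-s) j\<close>:
  the first \<open>2^j\<close> digits sum to at least \<open>2^j j / 64 = 2^s 8 L\<close> outside a set of measure
  \<open>O(e^(-j/50))\<close>; no prime digit exceeds \<open>L\<close> outside measure \<open>O(2^s/j^2)\<close>, by Chebyshev's
  \<open>\<Sum>p>L. 1/p\<^sup>2 = O(1/(L log L))\<close>; and the prime digits below \<open>L\<close> sum to less than \<open>8 L\<close> outside
  measure \<open>O(1/j^2)\<close>, since \<open>\<Sum>p\<le>L. 1/p = O(log j)\<close>. By Borel-Cantelli, almost every \<open>x\<close>
  eventually has prime digit sum at most \<open>2^-s\<close> times its digit sum, for every \<open>s\<close>.\<close>

definition gauss_density :: "real \<Rightarrow> real" where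
  "gauss_density y = 1 / (1 + y)"

text \<open>The Gauss density transported along the inverse branch \<open>y \<mapsto> 1/(k+y)\<close> of the Gauss
  map, see \<open>branch_density_eq\<close>.\<close>
definition branch_density :: "nat \<Rightarrow> real \<Rightarrow> real" where
  "branch_density k y = 1 / ((real k + y) * (real k + 1 + y))"

definition gauss_branch :: "nat \<Rightarrow> real set" where
  "gauss_branch k = {1 / (real k + 1)<..<1 / real k}"

lemma gauss_density_bounds:
  assumes "0 < y" "y < 1"
  shows "1/2 \<le> gauss_density y" "gauss_density y \<le> 1"
  using assms unfolding gauss_density_def by (auto simp: field_simps)

lemma gauss_density_nonneg: "0 \<le> y \<Longrightarrow> 0 \<le> gauss_density y"
  unfolding gauss_density_def by simp

lemma branch_density_eq:
  assumes "0 < real k + y"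
  shows "branch_density k y = gauss_density (1 / (real k + y)) / (real k + y) ^ 2"
proof -
  define u where "u = real k + y"
  have u: "0 < u"
    using assms unfolding u_def by auto
  then have "gauss_density (1 / u) / u ^ 2 = 1 / (u * (u + 1))"
    unfolding gauss_density_def by (simp add: divide_simps power2_eq_square)
  then show ?thesis
    unfolding branch_density_def u_def by (simp add: add_ac)
qed

lemma branch_density_nonneg: "0 \<le> y \<Longrightarrow> 0 \<le> branch_density k y"
  unfolding branch_density_def by simp

lemma branch_density_le:
  assumes y: "0 < y" "y < 1" and k: "k \<ge> 1"
  shows "branch_density k y \<le> 2 * gauss_density y / real k ^ 2"
proof -
  have "branch_density k y \<le> 1 / real k ^ 2"
    unfolding branch_density_def using y k
    by (intro divide_left_mono) (auto simp: power2_eq_square intro!: mult_mono)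
  also have "\<dots> \<le> 2 * gauss_density y / real k ^ 2"
    using gauss_density_bounds[OF y] by (intro divide_right_mono) auto
  finally show ?thesis .
qed

lemma branch_density_ge:
  assumes y: "0 < y" "y < 1" and k: "k \<ge> 1"
  shows "gauss_density y / ((real k + 1) * (real k + 2)) \<le> branch_density k y"
proof -
  have "gauss_density y / ((real k + 1) * (real k + 2)) \<le> 1 / ((real k + 1) * (real k + 2))"
    using gauss_density_bounds[OF y] by (intro divide_right_mono) auto
  also have "\<dots> \<le> branch_density k y"
    unfolding branch_density_def using y k by (intro divide_left_mono) (auto intro!: mult_mono)
  finally show ?thesis .
qed

text \<open>Invariance of the Gauss measure.\<close>
lemma branch_density_sums: "0 \<le> y \<Longrightarrow> (\<lambda>k. branch_density (Suc k) y) sums gauss_density y"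
proof -
  assume y: "0 \<le> y"
  define f where "f n = 1 / (real n + 1 + y)" for n
  have "f \<longlonglongrightarrow> 0"
    unfolding f_def using y by real_asymp
  then have "(\<lambda>n. f n - f (Suc n)) sums (f 0 - 0)"
    by (rule telescope_sums')
  moreover have "f n - f (Suc n) = branch_density (Suc n) y" for n
    unfolding f_def branch_density_def using y by (simp add: field_simps)
  moreover have "f 0 = gauss_density y"
    unfolding f_def gauss_density_def by (simp add: add.commute)
  ultimately show ?thesis by simp
qed

lemma summable_bounded_weights_branch_density:
  fixes h :: "nat \<Rightarrow> real"
  assumes "\<And>k. 0 \<le> h k" "\<And>k. h k \<le> B" "0 \<le> y"
  shows "summable (\<lambda>k. h (Suc k) * branch_density (Suc k) y)"
proof (rule summable_comparison_test')
  show "summable (\<lambda>k. B * branch_density (Suc k) y)"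
    using branch_density_sums[OF assms(3)] by (intro summable_mult) (auto simp: sums_iff)
  show "norm (h (Suc k) * branch_density (Suc k) y) \<le> B * branch_density (Suc k) y" for k
    using assms(1,2)[of "Suc k"] branch_density_nonneg[OF assms(3)] by (simp add: mult_right_mono)
qed

lemma measurable_gauss_density [measurable]: "gauss_density \<in> borel_measurable borel"
  unfolding gauss_density_def by measurable

lemma measurable_branch_density [measurable]: "branch_density k \<in> borel_measurable borel"
  unfolding branch_density_def by measurable

lemma measurable_gauss_map [measurable]: "gauss_map \<in> borel_measurable borel"
  unfolding gauss_map_def frac_def by measurable

lemma measurable_funpow_gauss_map [measurable]: "(gauss_map ^^ n) \<in> borel_measurable borel"
  by (induction n) auto

lemma measurable_cf_digit [measurable]: "cf_digit k \<in> borel \<rightarrow>\<^sub>M count_space UNIV"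
proof -
  have real_digit: "(\<lambda>x. real (cf_digit k x)) \<in> borel_measurable borel"
    unfolding cf_digit_def by measurable
  have "cf_digit k -` {a} = (\<lambda>x. real (cf_digit k x)) -` {real a}" for a
    by auto
  then have "cf_digit k -` {a} \<in> sets borel" for a
    using measurable_sets[OF real_digit, of "{real a}"] by simp
  then show ?thesis
    by (subst measurable_count_space_eq2_countable) auto
qed

lemma cf_digit_1: "cf_digit 1 x = nat \<lfloor>1 / x\<rfloor>"
  by (simp add: cf_digit_def)

lemma cf_digit_Suc_Suc: "cf_digit (Suc (Suc i)) x = cf_digit (Suc i) (gauss_map x)"
  by (simp add: cf_digit_def funpow_swap1)

lemma cf_digit_gauss_map_on_branch:
  assumes k: "k \<ge> 1" and x: "x \<in> gauss_branch k"
  shows "cf_digit 1 x = k" "gauss_map x = 1 / x - real k"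
proof -
  have "0 < 1 / (real k + 1)" by simp
  then have xpos: "x > 0"
    using x unfolding gauss_branch_def by (meson greaterThanLessThan_iff less_trans)
  have "real k < 1 / x" "1 / x < real k + 1"
    using x xpos k unfolding gauss_branch_def by (auto simp: field_simps)
  then have floor: "\<lfloor>1 / x\<rfloor> = int k"
    by (simp add: floor_eq_iff)
  show "cf_digit 1 x = k"
    unfolding cf_digit_1 floor by simp
  show "gauss_map x = 1 / x - real k"
    unfolding gauss_map_def frac_def using xpos floor by simp
qed

lemma disjoint_family_gauss_branch: "disjoint_family gauss_branch"
  unfolding disjoint_family_on_def
proof (intro ballI impI)
  have disj: "gauss_branch k \<inter> gauss_branch l = {}" if "k < l" for k l
  proof -
    have "1 / real l \<le> 1 / (real k + 1)"
      using that by (cases "k = 0") (auto simp: field_simps)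
    then show ?thesis unfolding gauss_branch_def by auto
  qed
  fix k l :: nat assume "k \<noteq> l"
  then show "gauss_branch k \<inter> gauss_branch l = {}"
    using disj[of k l] disj[of l k] by (cases "k < l") auto
qed

lemma mem_gauss_branch_iff:
  assumes "\<forall>k::nat. x \<noteq> 1 / (real k + 1)"
  shows "x \<in> {0<..<1} \<longleftrightarrow> (\<exists>k. x \<in> gauss_branch (Suc k))"
proof
  assume x: "x \<in> {0<..<1}"
  define m where "m = nat \<lfloor>1 / x\<rfloor>"
  have "1 < 1 / x" using x by (simp add: field_simps)
  then have m: "real m \<le> 1 / x" "1 / x < real m + 1" "m \<ge> 1"
    unfolding m_def by linarith+
  have "1 / x \<noteq> real m"
  proof
    assume "1 / x = real m"
    then have "x = 1 / (real (m - 1) + 1)" using m(3) x by (simp add: of_nat_diff field_simps)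
    then show False using assms by blast
  qed
  then have "x \<in> gauss_branch (Suc (m - 1))"
    using m x unfolding gauss_branch_def by (auto simp: field_simps of_nat_diff)
  then show "\<exists>k. x \<in> gauss_branch (Suc k)" ..
next
  assume "\<exists>k. x \<in> gauss_branch (Suc k)"
  then obtain k where k: "1 / (real (Suc k) + 1) < x" "x < 1 / real (Suc k)"
    unfolding gauss_branch_def by auto
  have "0 < x" by (rule less_trans[OF _ k(1)]) simp
  moreover have "x < 1" by (rule less_le_trans[OF k(2)]) simp
  ultimately show "x \<in> {0<..<1}" by simp
qed

lemma AE_mem_gauss_branch_iff: "AE x in lborel. x \<in> {0<..<1} \<longleftrightarrow> (\<exists>k. x \<in> gauss_branch (Suc k))"
proof -
  have "AE x in lborel. \<forall>k::nat. x \<noteq> 1 / (real k + 1)"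
    by (subst AE_all_countable) (auto intro: AE_lborel_singleton)
  then show ?thesis
    by (rule eventually_mono) (rule mem_gauss_branch_iff)
qed

text \<open>Substituting \<open>x = 1/(k+1-s)\<close> and then \<open>y = 1 - s\<close>.\<close>
lemma nn_integral_gauss_branch:
  fixes H :: "real \<Rightarrow> ennreal"
  assumes H [measurable]: "H \<in> borel_measurable borel" and k: "k \<ge> 1"
  shows "(\<integral>\<^sup>+x. H (1 / x - real k) * ennreal (gauss_density x) * indicator (gauss_branch k) x \<partial>lborel)
       = (\<integral>\<^sup>+y. H y * ennreal (branch_density k y) * indicator {0<..<1} y \<partial>lborel)"
proof -
  define f where "f x = H (1 / x - real k) * ennreal (gauss_density x)" for x
  define g where "g s = 1 / (real k + 1 - s)" for s :: real
  define g' where "g' s = 1 / (real k + 1 - s) ^ 2" for s :: real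
  have [measurable]: "f \<in> borel_measurable borel"
    unfolding f_def gauss_density_def by measurable
  have "(\<integral>\<^sup>+x. H (1 / x - real k) * ennreal (gauss_density x) * indicator (gauss_branch k) x \<partial>lborel)
      = (\<integral>\<^sup>+x. f x * indicator {g 0..g 1} x \<partial>lborel)"
    by (intro nn_integral_cong_AE,
        use AE_lborel_singleton[of "1 / (real k + 1)"] AE_lborel_singleton[of "1 / real k"] in eventually_elim)
       (auto simp: f_def g_def gauss_branch_def indicator_def)
  also have "\<dots> = (\<integral>\<^sup>+s. f (g s) * g' s * indicator {0..1} s \<partial>lborel)"
  proof (rule nn_integral_substitution_aux)
    fix s :: real assume "s \<in> {0..1}"
    then have "real k + 1 - s \<noteq> 0" using k by auto
    then show "(g has_real_derivative g' s) (at s)"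
      unfolding g_def g'_def by (auto intro!: derivative_eq_intros simp: power2_eq_square field_simps)
  next
    show "continuous_on {0..1} g'"
      unfolding g'_def using k by (intro continuous_intros) auto
  qed (auto simp: g'_def)
  also have "\<dots> = (\<integral>\<^sup>+s. H (1 - s) * ennreal (branch_density k (1 - s)) * indicator {0..1} s \<partial>lborel)"
  proof (intro nn_integral_cong)
    fix s :: real
    show "f (g s) * ennreal (g' s) * indicator {0..1} s
        = H (1 - s) * ennreal (branch_density k (1 - s)) * indicator {0..1} s"
    proof (cases "s \<in> {0..1}")
      case True
      then have u: "0 < real k + (1 - s)"
        using k by auto
      then have "gauss_density (g s) * g' s = branch_density k (1 - s)"
        unfolding branch_density_eq[OF u] g_def g'_def by (simp add: algebra_simps divide_inverse)
      moreover have "1 / g s - real k = 1 - s"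
        unfolding g_def by simp
      moreover have "0 \<le> gauss_density (g s)" "0 \<le> g' s"
        using u unfolding g_def g'_def by (auto intro: gauss_density_nonneg)
      ultimately show ?thesis
        using True by (simp add: f_def mult.assoc ennreal_mult[symmetric])
    qed simp
  qed
  also have "\<dots> = (\<integral>\<^sup>+y. H y * ennreal (branch_density k y) * indicator {0..1} y \<partial>lborel)"
    using nn_integral_real_affine[of "\<lambda>y. H y * ennreal (branch_density k y) * indicator {0..1} y" "-1" 1]
    by (simp add: indicator_def conj_commute)
  also have "\<dots> = (\<integral>\<^sup>+y. H y * ennreal (branch_density k y) * indicator {0<..<1} y \<partial>lborel)"
    by (intro nn_integral_cong_AE, use AE_lborel_singleton[of 0] AE_lborel_singleton[of 1] in eventually_elim)
       (auto simp: indicator_def)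
  finally show ?thesis .
qed

lemma nn_integral_gauss_transfer:
  fixes H :: "real \<Rightarrow> ennreal" and g :: "nat \<Rightarrow> ennreal"
  assumes H [measurable]: "H \<in> borel_measurable borel"
  shows "(\<integral>\<^sup>+x. indicator {0<..<1} x * g (cf_digit 1 x) * H (gauss_map x) * ennreal (gauss_density x) \<partial>lborel)
       = (\<integral>\<^sup>+y. indicator {0<..<1} y * H y * (\<Sum>k. g (Suc k) * ennreal (branch_density (Suc k) y)) \<partial>lborel)"
proof -
  define B where "B k = gauss_branch (Suc k)" for k
  define F where "F x = g (cf_digit 1 x) * H (gauss_map x) * ennreal (gauss_density x)" for x
  have [measurable]: "F \<in> borel_measurable borel" "B k \<in> sets borel" for k
    unfolding F_def gauss_density_def B_def gauss_branch_def by measurable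
  have tiling: "AE x in lborel. x \<in> {0<..<1} \<longleftrightarrow> x \<in> (\<Union>k. B k)"
    using AE_mem_gauss_branch_iff unfolding B_def by simp
  have "(\<integral>\<^sup>+x. indicator {0<..<1} x * g (cf_digit 1 x) * H (gauss_map x) * ennreal (gauss_density x) \<partial>lborel)
      = (\<integral>\<^sup>+x \<in> (\<Union>k. B k). F x \<partial>lborel)"
    by (rule nn_integral_cong_AE, rule eventually_mono[OF tiling]) (auto simp: F_def indicator_def)
  also have "\<dots> = (\<Sum>k. \<integral>\<^sup>+x \<in> B k. F x \<partial>lborel)"
  proof (intro nn_integral_disjoint_family)
    show "disjoint_family B"
      using disjoint_family_gauss_branch unfolding B_def disjoint_family_on_def by blast
  qed auto
  also have "\<dots> = (\<Sum>k. \<integral>\<^sup>+y. g (Suc k) * (H y * ennreal (branch_density (Suc k) y) * indicator {0<..<1} y) \<partial>lborel)"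
  proof (intro suminf_cong)
    fix k
    have "(\<integral>\<^sup>+x \<in> B k. F x \<partial>lborel)
        = (\<integral>\<^sup>+x. g (Suc k) * (H (1 / x - real (Suc k)) * ennreal (gauss_density x) * indicator (B k) x) \<partial>lborel)"
      using cf_digit_gauss_map_on_branch[of "Suc k"]
      by (intro nn_integral_cong) (auto simp: F_def B_def indicator_def mult_ac)
    also have "\<dots> = g (Suc k) * (\<integral>\<^sup>+x. H (1 / x - real (Suc k)) * ennreal (gauss_density x) * indicator (B k) x \<partial>lborel)"
      by (rule nn_integral_cmult) (simp add: B_def gauss_branch_def)
    also have "\<dots> = g (Suc k) * (\<integral>\<^sup>+y. H y * ennreal (branch_density (Suc k) y) * indicator {0<..<1} y \<partial>lborel)"
      unfolding B_def by (simp only: nn_integral_gauss_branch[OF H])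
    also have "\<dots> = (\<integral>\<^sup>+y. g (Suc k) * (H y * ennreal (branch_density (Suc k) y) * indicator {0<..<1} y) \<partial>lborel)"
      by (simp add: nn_integral_cmult branch_density_def)
    finally show "(\<integral>\<^sup>+x \<in> B k. F x \<partial>lborel) = \<dots>" .
  qed
  also have "\<dots> = (\<integral>\<^sup>+y. (\<Sum>k. g (Suc k) * (H y * ennreal (branch_density (Suc k) y) * indicator {0<..<1} y)) \<partial>lborel)"
    by (rule nn_integral_suminf[symmetric]) (simp add: branch_density_def)
  also have "\<dots> = (\<integral>\<^sup>+y. indicator {0<..<1} y * H y * (\<Sum>k. g (Suc k) * ennreal (branch_density (Suc k) y)) \<partial>lborel)"
    by (intro nn_integral_cong, subst ennreal_suminf_cmult[symmetric], intro suminf_cong) (simp add: mult_ac)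
  finally show ?thesis .
qed

lemma nn_integral_gauss_transfer_le:
  fixes H :: "real \<Rightarrow> ennreal" and g :: "nat \<Rightarrow> ennreal"
  assumes H [measurable]: "H \<in> borel_measurable borel"
    and transfer: "\<And>y. y \<in> {0<..<1} \<Longrightarrow>
      (\<Sum>k. g (Suc k) * ennreal (branch_density (Suc k) y)) \<le> c * ennreal (gauss_density y)"
  shows "(\<integral>\<^sup>+x. indicator {0<..<1} x * g (cf_digit 1 x) * H (gauss_map x) * ennreal (gauss_density x) \<partial>lborel)
       \<le> c * (\<integral>\<^sup>+y. indicator {0<..<1} y * H y * ennreal (gauss_density y) \<partial>lborel)"
proof -
  have "(\<integral>\<^sup>+y. indicator {0<..<1} y * H y * (\<Sum>k. g (Suc k) * ennreal (branch_density (Suc k) y)) \<partial>lborel)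
      \<le> (\<integral>\<^sup>+y. c * (indicator {0<..<1} y * H y * ennreal (gauss_density y)) \<partial>lborel)"
  proof (intro nn_integral_mono)
    fix y
    show "indicator {0<..<1} y * H y * (\<Sum>k. g (Suc k) * ennreal (branch_density (Suc k) y))
        \<le> c * (indicator {0<..<1} y * H y * ennreal (gauss_density y))"
    proof (cases "y \<in> {0<..<1}")
      case True
      then have "H y * (\<Sum>k. g (Suc k) * ennreal (branch_density (Suc k) y)) \<le> H y * (c * ennreal (gauss_density y))"
        by (intro mult_left_mono transfer) auto
      then show ?thesis using True by (simp add: mult_ac)
    qed simp
  qed
  also have "\<dots> = c * (\<integral>\<^sup>+y. indicator {0<..<1} y * H y * ennreal (gauss_density y) \<partial>lborel)"
    by (rule nn_integral_cmult) simp
  finally show ?thesis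
    unfolding nn_integral_gauss_transfer[OF H] .
qed

lemma nn_integral_gauss_digits_le:
  fixes g :: "nat \<Rightarrow> nat \<Rightarrow> ennreal" and c :: "nat \<Rightarrow> ennreal" and H :: "real \<Rightarrow> ennreal"
  assumes H [measurable]: "H \<in> borel_measurable borel"
    and transfer: "\<And>i y. y \<in> {0<..<1} \<Longrightarrow>
      (\<Sum>k. g i (Suc k) * ennreal (branch_density (Suc k) y)) \<le> c i * ennreal (gauss_density y)"
  shows "(\<integral>\<^sup>+x. indicator {0<..<1} x * (\<Prod>i<n. g i (cf_digit (Suc i) x)) * H ((gauss_map ^^ n) x)
            * ennreal (gauss_density x) \<partial>lborel)
       \<le> (\<Prod>i<n. c i) * (\<integral>\<^sup>+y. indicator {0<..<1} y * H y * ennreal (gauss_density y) \<partial>lborel)"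
  using transfer
proof (induction n arbitrary: g c)
  case 0
  then show ?case by simp
next
  case (Suc n)
  define H' where "H' y = (\<Prod>i<n. g (Suc i) (cf_digit (Suc i) y)) * H ((gauss_map ^^ n) y)" for y
  have [measurable]: "H' \<in> borel_measurable borel"
    unfolding H'_def by measurable
  have shift: "(\<Prod>i<Suc n. g i (cf_digit (Suc i) x)) * H ((gauss_map ^^ Suc n) x)
      = g 0 (cf_digit 1 x) * H' (gauss_map x)" for x
    unfolding H'_def prod.lessThan_Suc_shift funpow_Suc_right by (simp add: cf_digit_Suc_Suc mult_ac)
  have "(\<integral>\<^sup>+x. indicator {0<..<1} x * (\<Prod>i<Suc n. g i (cf_digit (Suc i) x)) * H ((gauss_map ^^ Suc n) x)
          * ennreal (gauss_density x) \<partial>lborel)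
      = (\<integral>\<^sup>+x. indicator {0<..<1} x * g 0 (cf_digit 1 x) * H' (gauss_map x) * ennreal (gauss_density x) \<partial>lborel)"
    by (intro nn_integral_cong) (metis (no_types) shift mult.assoc)
  also have "\<dots> \<le> c 0 * (\<integral>\<^sup>+y. indicator {0<..<1} y * H' y * ennreal (gauss_density y) \<partial>lborel)"
    by (rule nn_integral_gauss_transfer_le) (use Suc.prems in auto)
  also have "\<dots> \<le> c 0 * ((\<Prod>i<n. c (Suc i)) * (\<integral>\<^sup>+y. indicator {0<..<1} y * H y * ennreal (gauss_density y) \<partial>lborel))"
  proof (intro mult_left_mono)
    show "(\<integral>\<^sup>+y. indicator {0<..<1} y * H' y * ennreal (gauss_density y) \<partial>lborel)
        \<le> (\<Prod>i<n. c (Suc i)) * (\<integral>\<^sup>+y. indicator {0<..<1} y * H y * ennreal (gauss_density y) \<partial>lborel)"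
      using Suc.IH[of "\<lambda>i. g (Suc i)" "\<lambda>i. c (Suc i)"] Suc.prems
      unfolding H'_def by (simp add: mult.assoc)
  qed simp
  also have "\<dots> = (\<Prod>i<Suc n. c i) * (\<integral>\<^sup>+y. indicator {0<..<1} y * H y * ennreal (gauss_density y) \<partial>lborel)"
    unfolding prod.lessThan_Suc_shift by (simp add: mult_ac)
  finally show ?case .
qed

lemma gauss_integral_le_one:
  "(\<integral>\<^sup>+y. indicator {0<..<1} y * ennreal (gauss_density y) \<partial>lborel) \<le> 1"
proof -
  have "(\<integral>\<^sup>+y. indicator {0<..<1} y * ennreal (gauss_density y) \<partial>lborel)
      \<le> (\<integral>\<^sup>+y. indicator {0<..<1::real} y \<partial>lborel)"
    using gauss_density_bounds by (intro nn_integral_mono) (auto simp: indicator_def)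
  then show ?thesis by simp
qed

lemma ennreal_suminf_branch_density_le:
  fixes h :: "nat \<Rightarrow> real"
  assumes h: "\<And>k. 0 \<le> h k" and y: "0 < y" "y < 1"
    and summable: "summable (\<lambda>k. h (Suc k) * branch_density (Suc k) y)"
    and le: "(\<Sum>k. h (Suc k) * branch_density (Suc k) y) \<le> c * gauss_density y"
  shows "(\<Sum>k. ennreal (h (Suc k)) * ennreal (branch_density (Suc k) y)) \<le> ennreal c * ennreal (gauss_density y)"
proof -
  have nonneg: "0 \<le> h (Suc k) * branch_density (Suc k) y" for k
    using h branch_density_nonneg y by simp
  have "(\<Sum>k. ennreal (h (Suc k)) * ennreal (branch_density (Suc k) y))
      = (\<Sum>k. ennreal (h (Suc k) * branch_density (Suc k) y))"
    using y h branch_density_nonneg by (simp add: ennreal_mult)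
  also have "\<dots> = ennreal (\<Sum>k. h (Suc k) * branch_density (Suc k) y)"
    by (intro suminf_ennreal2 nonneg summable)
  also have "\<dots> \<le> ennreal (c * gauss_density y)"
    using le by (rule ennreal_leI)
  also have "\<dots> = ennreal c * ennreal (gauss_density y)"
    using y by (intro ennreal_mult'' gauss_density_nonneg) simp
  finally show ?thesis .
qed

text \<open>Exponential Markov inequality for events controlled by the digits. The density of the
  Gauss measure lies in \<open>[1/2, 1]\<close>, which costs the factor 2.\<close>
lemma emeasure_digit_event_le:
  fixes h :: "nat \<Rightarrow> nat \<Rightarrow> real" and c :: "nat \<Rightarrow> real"
  assumes E [measurable]: "E \<in> sets borel" and C: "0 \<le> C"
    and h_nonneg: "\<And>i k. 0 \<le> h i k"
    and summable: "\<And>i y. 0 < y \<Longrightarrow> y < 1 \<Longrightarrow> summable (\<lambda>k. h i (Suc k) * branch_density (Suc k) y)"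
    and transfer: "\<And>i y. 0 < y \<Longrightarrow> y < 1 \<Longrightarrow>
      (\<Sum>k. h i (Suc k) * branch_density (Suc k) y) \<le> c i * gauss_density y"
    and dominated: "\<And>x. x \<in> {0<..<1} \<Longrightarrow> x \<in> E \<Longrightarrow> 1 \<le> C * (\<Prod>i<n. h i (cf_digit (Suc i) x))"
  shows "emeasure lborel ({0<..<1} \<inter> E) \<le> ennreal (2 * C * (\<Prod>i<n. c i))"
proof -
  have c_nonneg: "0 \<le> c i" for i
  proof -
    have "0 \<le> (\<Sum>k. h i (Suc k) * branch_density (Suc k) (1/2))"
      using h_nonneg branch_density_nonneg by (intro suminf_nonneg summable) auto
    also have "\<dots> \<le> c i * gauss_density (1/2)"
      by (rule transfer) auto
    finally show ?thesis by (simp add: gauss_density_def zero_le_mult_iff)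
  qed
  let ?D = "\<lambda>x. \<Prod>i<n. ennreal (h i (cf_digit (Suc i) x))"
  have "emeasure lborel ({0<..<1} \<inter> E) = (\<integral>\<^sup>+x. indicator ({0<..<1} \<inter> E) x \<partial>lborel)"
    by simp
  also have "\<dots> \<le> (\<integral>\<^sup>+x. ennreal (2 * C) * (indicator {0<..<1} x * ?D x * 1 * ennreal (gauss_density x)) \<partial>lborel)"
  proof (intro nn_integral_mono)
    fix x
    show "indicator ({0<..<1} \<inter> E) x \<le> ennreal (2 * C) * (indicator {0<..<1} x * ?D x * 1 * ennreal (gauss_density x))"
    proof (cases "x \<in> {0<..<1} \<inter> E")
      case True
      have "1 * 1 \<le> (C * (\<Prod>i<n. h i (cf_digit (Suc i) x))) * (2 * gauss_density x)"
        using dominated[of x] gauss_density_bounds[of x] True by (intro mult_mono) auto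
      then have "ennreal 1 \<le> ennreal (2 * C * (\<Prod>i<n. h i (cf_digit (Suc i) x)) * gauss_density x)"
        by (intro ennreal_leI) (simp add: mult_ac)
      also have "\<dots> = ennreal (2 * C) * (?D x * ennreal (gauss_density x))"
        using C prod_nonneg[of "{..<n}" "\<lambda>i. h i (cf_digit (Suc i) x)"] h_nonneg
        by (simp add: ennreal_mult' mult.assoc prod_ennreal)
      finally show ?thesis
        using True by simp
    qed simp
  qed
  also have "\<dots> = ennreal (2 * C) * (\<integral>\<^sup>+x. indicator {0<..<1} x * ?D x * 1 * ennreal (gauss_density x) \<partial>lborel)"
    by (rule nn_integral_cmult) simp
  also have "\<dots> \<le> ennreal (2 * C) * ((\<Prod>i<n. ennreal (c i)) * (\<integral>\<^sup>+y. indicator {0<..<1} y * 1 * ennreal (gauss_density y) \<partial>lborel))"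
    using nn_integral_gauss_digits_le[where H = "\<lambda>_. 1" and g = "\<lambda>i k. ennreal (h i k)" and c = "\<lambda>i. ennreal (c i)"]
      ennreal_suminf_branch_density_le[OF h_nonneg _ _ summable transfer]
    by (intro mult_left_mono) auto
  also have "\<dots> \<le> ennreal (2 * C) * (\<Prod>i<n. ennreal (c i))"
    using mult_left_mono[OF gauss_integral_le_one] by (intro mult_left_mono) auto
  also have "\<dots> = ennreal (2 * C * (\<Prod>i<n. c i))"
    using C c_nonneg by (simp add: prod_ennreal ennreal_mult prod_nonneg)
  finally show ?thesis .
qed

text \<open>\<open>laplace_gap t M\<close> is a lower bound for \<open>1 - \<integral> exp (- t a\<^sub>1) d\<mu>\<close>, the defect of the Laplace
  transform of the first digit under the Gauss measure \<open>\<mu>\<close>, using only the digits up to \<open>M\<close>.\<close>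
definition laplace_gap :: "real \<Rightarrow> nat \<Rightarrow> real" where
  "laplace_gap t M = (\<Sum>k<M. (1 - exp (- t * real (Suc k))) / ((real (Suc k) + 1) * (real (Suc k) + 2)))"

lemma one_minus_exp_neg_ge:
  fixes u :: real
  assumes "0 \<le> u" "u \<le> 1"
  shows "u / 3 \<le> 1 - exp (- u)"
proof -
  have "exp (- u) * (1 + u) \<le> 1"
    using exp_ge_add_one_self[of u] by (simp add: exp_minus field_simps)
  moreover have "1 / 3 \<le> exp (- u)"
    using exp_le assms order_trans[of "1/3" "exp (-1)" "exp (- u)"] by (simp add: exp_minus field_simps)
  then have "u / 3 \<le> u * exp (- u)"
    using assms by (simp add: mult_left_mono[of "1/3" "exp (- u)" u, simplified])
  ultimately show ?thesis
    by (simp add: algebra_simps)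
qed

lemma harm_le_laplace_gap:
  assumes t: "0 < t" "t * real M \<le> 1"
  shows "t * harm M / 18 \<le> laplace_gap t M"
proof -
  have "t * harm M / 18 = (\<Sum>k<M. t / (18 * real (Suc k)))"
    by (simp add: harm_altdef sum_divide_distrib sum_distrib_left inverse_eq_divide field_simps)
  also have "\<dots> \<le> laplace_gap t M"
    unfolding laplace_gap_def
  proof (rule sum_mono)
    fix k assume "k \<in> {..<M}"
    define a where "a = real (Suc k)"
    have "a \<le> real M"
      using \<open>k \<in> {..<M}\<close> unfolding a_def by simp
    then have "t * a \<le> t * real M"
      using t by (intro mult_left_mono) auto
    then have a: "a \<ge> 1" "t * a \<le> 1"
      using t(2) unfolding a_def by linarith+
    have "t * a / 3 \<le> 1 - exp (- (t * a))"
      using a t by (intro one_minus_exp_neg_ge) auto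
    moreover have "(a + 1) * (a + 2) \<le> 6 * a ^ 2" "0 < (a + 1) * (a + 2)"
      using a mult_right_mono[of 1 a "5 * a + 2"] by (auto simp: power2_eq_square algebra_simps)
    ultimately have "t * a / 3 / (6 * a ^ 2) \<le> (1 - exp (- (t * a))) / ((a + 1) * (a + 2))"
      using t a by (intro frac_le) auto
    then show "t / (18 * real (Suc k)) \<le> (1 - exp (- t * real (Suc k))) / ((real (Suc k) + 1) * (real (Suc k) + 2))"
      using a unfolding a_def[symmetric] by (simp add: power2_eq_square field_simps)
  qed
  finally show ?thesis .
qed

lemma suminf_exp_neg_branch_density_le:
  assumes t: "0 \<le> t" and y: "0 < y" "y < 1"
  shows "(\<Sum>k. exp (- t * real (Suc k)) * branch_density (Suc k) y) \<le> exp (- laplace_gap t M) * gauss_density y"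
proof -
  define u where "u k = branch_density (Suc k) y" for k
  define w where "w k = (1 - exp (- t * real (Suc k))) * u k" for k
  have u: "u sums gauss_density y" "0 \<le> u k" for k
    unfolding u_def using branch_density_sums branch_density_nonneg y by auto
  have w: "summable w" "0 \<le> w k" for k
    using summable_bounded_weights_branch_density[of "\<lambda>k. 1 - exp (- t * real k)" 1 y] t y u(2)
    unfolding w_def u_def by auto
  have "laplace_gap t M * gauss_density y \<le> (\<Sum>k<M. w k)"
    unfolding laplace_gap_def sum_distrib_right
  proof (rule sum_mono)
    fix k
    have "gauss_density y / ((real (Suc k) + 1) * (real (Suc k) + 2)) \<le> u k"
      unfolding u_def using y by (intro branch_density_ge) auto
    then have "(1 - exp (- t * real (Suc k))) * (gauss_density y / ((real (Suc k) + 1) * (real (Suc k) + 2)))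
        \<le> (1 - exp (- t * real (Suc k))) * u k"
      using t by (intro mult_left_mono) auto
    then show "(1 - exp (- t * real (Suc k))) / ((real (Suc k) + 1) * (real (Suc k) + 2)) * gauss_density y \<le> w k"
      unfolding w_def by (simp only: times_divide_eq_left times_divide_eq_right)
  qed
  also have "\<dots> \<le> suminf w"
    using w by (intro sum_le_suminf) auto
  finally have "(\<Sum>k. exp (- t * real (Suc k)) * branch_density (Suc k) y) \<le> (1 - laplace_gap t M) * gauss_density y"
    using sums_diff[OF u(1) summable_sums[OF w(1)]] unfolding w_def u_def
    by (simp add: sums_iff algebra_simps)
  also have "\<dots> \<le> exp (- laplace_gap t M) * gauss_density y"
    using exp_ge_add_one_self[of "- laplace_gap t M"] gauss_density_bounds[OF y]
    by (intro mult_right_mono) auto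
  finally show ?thesis .
qed

text \<open>Chernoff bound with \<open>t = 1/n\<close>: the sum of \<open>n\<close> digits is rarely much smaller than \<open>n log n\<close>.\<close>
lemma emeasure_small_digit_sum_le:
  assumes n: "n \<ge> 1"
  shows "emeasure lborel ({0<..<1} \<inter> {x. (\<Sum>i<n. real (cf_digit (Suc i) x)) < A})
    \<le> ennreal (2 * exp (A / real n - harm n / 18))"
proof -
  define t where "t = 1 / real n"
  have t: "0 < t" "t * real n = 1"
    unfolding t_def using n by auto
  define D where "D = laplace_gap t n"
  have "emeasure lborel ({0<..<1} \<inter> {x. (\<Sum>i<n. real (cf_digit (Suc i) x)) < A})
      \<le> ennreal (2 * exp (t * A) * (\<Prod>i<n. exp (- D)))"
  proof (rule emeasure_digit_event_le[where h = "\<lambda>i k. exp (- t * real k)"])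
    fix x assume "x \<in> {x. (\<Sum>i<n. real (cf_digit (Suc i) x)) < A}"
    then have S: "t * (\<Sum>i<n. real (cf_digit (Suc i) x)) \<le> t * A"
      using t by (intro mult_left_mono) auto
    have "(\<Prod>i<n. exp (- t * real (cf_digit (Suc i) x))) = exp (- (t * (\<Sum>i<n. real (cf_digit (Suc i) x))))"
      by (simp add: exp_sum[symmetric] sum_negf sum_distrib_left)
    then show "1 \<le> exp (t * A) * (\<Prod>i<n. exp (- t * real (cf_digit (Suc i) x)))"
      using S by (simp add: exp_add[symmetric])
  next
    fix y :: real assume "0 < y" "y < 1"
    then show "summable (\<lambda>k. exp (- t * real (Suc k)) * branch_density (Suc k) y)"
      "(\<Sum>k. exp (- t * real (Suc k)) * branch_density (Suc k) y) \<le> exp (- D) * gauss_density y"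
      using summable_bounded_weights_branch_density[of "\<lambda>k. exp (- t * real k)" 1 y] t
        suminf_exp_neg_branch_density_le[of t y n]
      unfolding D_def by auto
  qed auto
  also have "\<dots> \<le> ennreal (2 * exp (A / real n - harm n / 18))"
  proof (intro ennreal_leI)
    have "harm n / 18 = (t * real n) * harm n / 18"
      using t by simp
    also have "\<dots> = t * harm n / 18 * real n"
      by (simp add: algebra_simps)
    also have "\<dots> \<le> D * real n"
      using harm_le_laplace_gap[of t n] t unfolding D_def by (intro mult_right_mono) auto
    finally have "harm n / 18 \<le> D * real n" .
    then have "exp (t * A) * exp (- D) ^ n \<le> exp (A / real n - harm n / 18)"
      using t by (simp add: exp_of_nat_mult[symmetric] exp_add[symmetric] t_def mult_ac)
    then show "2 * exp (t * A) * (\<Prod>i<n. exp (- D)) \<le> 2 * exp (A / real n - harm n / 18)"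
      by simp
  qed
  finally show ?thesis .
qed

lemma prod_primes_dvd:
  fixes A :: "nat set"
  assumes "finite A" "\<And>p. p \<in> A \<Longrightarrow> prime p \<and> p dvd m"
  shows "\<Prod>A dvd m"
  using assms
proof (induction A rule: finite_induct)
  case (insert p A)
  have "coprime p q" if "q \<in> A" for q
    using insert.prems[of p] insert.prems[of q] insert.hyps(2) that
    by (metis insertI1 insertI2 primes_coprime)
  then have "coprime p (\<Prod>A)"
    by (rule prod_coprime_right)
  then show ?case
    using insert by (simp add: divides_mult)
qed simp

text \<open>Chebyshev: every prime in \<open>(N, 2N]\<close> divides \<open>(2N choose N) \<le> 4^N\<close>.\<close>
lemma card_primes_between_le:
  fixes N :: nat
  assumes N: "N \<ge> 2"
  shows "real (card {p. prime p \<and> N < p \<and> p \<le> 2 * N}) \<le> 2 * ln 2 * real N / ln (real N)"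
proof -
  define A where "A = {p. prime p \<and> N < p \<and> p \<le> 2 * N}"
  have fin: "finite A"
    unfolding A_def by (rule finite_subset[of _ "{..2 * N}"]) auto
  have "\<Prod>A dvd (2 * N choose N)"
  proof (rule prod_primes_dvd[OF fin])
    fix p assume "p \<in> A"
    then have p: "prime p" "N < p" "p \<le> 2 * N"
      unfolding A_def by auto
    then have "p dvd fact N * fact N * (2 * N choose N)" "\<not> p dvd fact N"
      using binomial_fact_lemma[of N "2 * N"] by (auto simp: prime_dvd_fact_iff)
    then show "prime p \<and> p dvd (2 * N choose N)"
      using p by (simp add: prime_dvd_mult_iff)
  qed
  then have "\<Prod>A \<le> (2 * N choose N)"
    by (simp add: dvd_imp_le)
  also have "\<dots> \<le> 4 ^ N"
    using binomial_le_pow2[of "2 * N" N] by (simp add: power_mult)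
  finally have "N ^ card A \<le> 4 ^ N"
    using prod_mono[of A "\<lambda>_. N" id] unfolding A_def by fastforce
  then have "real N ^ card A \<le> 4 ^ N"
    by (metis of_nat_le_iff of_nat_power of_nat_numeral)
  then have "real (card A) * ln (real N) \<le> real N * (2 * ln 2)"
    using N ln_realpow[of 4 N] ln_realpow[of 2 2] by (subst (asm) ln_le_cancel_iff[symmetric]) (auto simp: ln_realpow)
  then show ?thesis
    using N unfolding A_def by (simp add: field_simps)
qed

lemma sum_inverse_primes_le_harm:
  "(\<Sum>p | prime p \<and> p \<le> 2 ^ Suc m. 1 / real p) \<le> 1/2 + 2 * harm m"
proof (induction m)
  case 0
  have "{p. prime p \<and> p \<le> (2::nat) ^ Suc 0} = {2}"
  proof (intro set_eqI iffI)
    fix p :: nat assume "p \<in> {p. prime p \<and> p \<le> 2 ^ Suc 0}"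
    then show "p \<in> {2}" using prime_ge_2_nat[of p] by simp
  qed simp
  then show ?case by (simp add: harm_def)
next
  case (Suc m)
  define N where "N = (2::nat) ^ Suc m"
  have N: "N \<ge> 2" "real N = 2 ^ Suc m"
    unfolding N_def by (simp_all add: self_le_power)
  have split: "{p. prime p \<and> p \<le> 2 ^ Suc (Suc m)} = {p. prime p \<and> p \<le> N} \<union> {p. prime p \<and> N < p \<and> p \<le> 2 * N}"
    unfolding N_def by auto
  have "(\<Sum>p | prime p \<and> p \<le> 2 ^ Suc (Suc m). 1 / real p)
      = (\<Sum>p | prime p \<and> p \<le> N. 1 / real p) + (\<Sum>p | prime p \<and> N < p \<and> p \<le> 2 * N. 1 / real p)"
    unfolding split
    by (rule sum.union_disjoint) (auto intro: finite_subset[of _ "{..N}"] finite_subset[of _ "{..2 * N}"])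
  also have "(\<Sum>p | prime p \<and> N < p \<and> p \<le> 2 * N. 1 / real p)
      \<le> real (card {p. prime p \<and> N < p \<and> p \<le> 2 * N}) * (1 / real N)"
    by (rule sum_bounded_above) (auto simp: field_simps)
  also have "\<dots> \<le> 2 * ln 2 * real N / ln (real N) * (1 / real N)"
    by (intro mult_right_mono card_primes_between_le N) simp
  also have "\<dots> = 2 / real (Suc m)"
  proof -
    have "ln (real N) = real (Suc m) * ln 2"
      unfolding N(2) by (simp only: ln_realpow)
    then show ?thesis using N(1) by simp
  qed
  finally have "(\<Sum>p | prime p \<and> p \<le> 2 ^ Suc (Suc m). 1 / real p)
      \<le> (\<Sum>p | prime p \<and> p \<le> N. 1 / real p) + 2 / real (Suc m)"
    by simp
  moreover have "harm (Suc m) = harm m + 1 / real (Suc m)"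
    by (simp add: harm_Suc inverse_eq_divide)
  ultimately show ?case
    using Suc.IH unfolding N_def by linarith
qed

lemma sum_inverse_square_primes_le:
  fixes N :: nat
  assumes N: "N \<ge> 2"
  shows "(\<Sum>p | prime p \<and> N < p \<and> p \<le> N * 2 ^ m. 1 / real p ^ 2)
    \<le> 4 * ln 2 / (real N * ln (real N)) * (1 - (1/2) ^ m)"
proof (induction m)
  case (Suc m)
  define M where "M = N * 2 ^ m"
  have M: "M \<ge> 2" "real M = real N * 2 ^ m" "N \<le> M"
    unfolding M_def using N by (simp_all add: mult_le_mono[of 2 N 1 "2 ^ m", simplified])
  have "N * 2 ^ Suc m = 2 * M"
    unfolding M_def by simp
  have "{p. prime p \<and> N < p \<and> p \<le> N * 2 ^ Suc m} = {p. prime p \<and> N < p \<and> p \<le> M} \<union> {p. prime p \<and> M < p \<and> p \<le> 2 * M}"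
    using M(3) \<open>N * 2 ^ Suc m = 2 * M\<close> by (auto simp del: mult_2 power_Suc)
  then have "(\<Sum>p | prime p \<and> N < p \<and> p \<le> N * 2 ^ Suc m. 1 / real p ^ 2)
      = (\<Sum>p | prime p \<and> N < p \<and> p \<le> M. 1 / real p ^ 2) + (\<Sum>p | prime p \<and> M < p \<and> p \<le> 2 * M. 1 / real p ^ 2)"
    by (simp only:, intro sum.union_disjoint)
       (auto intro: finite_subset[of _ "{..M}"] finite_subset[of _ "{..2 * M}"])
  also have "(\<Sum>p | prime p \<and> M < p \<and> p \<le> 2 * M. 1 / real p ^ 2)
      \<le> real (card {p. prime p \<and> M < p \<and> p \<le> 2 * M}) * (1 / real M ^ 2)"
    by (rule sum_bounded_above) (auto simp: field_simps power_mono)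
  also have "\<dots> \<le> 2 * ln 2 * real M / ln (real M) * (1 / real M ^ 2)"
    by (intro mult_right_mono card_primes_between_le M) simp
  also have "\<dots> \<le> 2 * ln 2 / (real M * ln (real N))"
    using M N by (simp add: power2_eq_square field_simps frac_le mult_left_mono)
  also have "\<dots> = 4 * ln 2 / (real N * ln (real N)) * (1/2) ^ Suc m"
    using M(2) by (simp add: field_simps power_divide)
  finally have "(\<Sum>p | prime p \<and> N < p \<and> p \<le> N * 2 ^ Suc m. 1 / real p ^ 2)
      \<le> (\<Sum>p | prime p \<and> N < p \<and> p \<le> M. 1 / real p ^ 2) + 4 * ln 2 / (real N * ln (real N)) * (1/2) ^ Suc m"
    by simp
  also have "\<dots> \<le> 4 * ln 2 / (real N * ln (real N)) * (1 - (1/2) ^ m) + 4 * ln 2 / (real N * ln (real N)) * (1/2) ^ Suc m"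
    using Suc.IH unfolding M_def by (rule add_right_mono)
  also have "\<dots> = 4 * ln 2 / (real N * ln (real N)) * (1 - (1/2) ^ Suc m)"
    by (simp only: power_Suc ring_distribs) simp
  finally show ?case .
next
  case 0
  have "(\<Sum>p | prime p \<and> N < p \<and> p \<le> N. 1 / real p ^ 2) \<le> 0"
    by (intro sum_nonpos) auto
  then show ?case by simp
qed

lemma suminf_large_prime_branch_density_le:
  assumes N: "N \<ge> 2" and y: "0 < y" "y < 1"
  shows "(\<Sum>k. of_bool (prime (Suc k) \<and> N < Suc k) * branch_density (Suc k) y)
    \<le> 8 * ln 2 / (real N * ln (real N)) * gauss_density y"
proof (rule suminf_le_const)
  show "summable (\<lambda>k. of_bool (prime (Suc k) \<and> N < Suc k) * branch_density (Suc k) y)"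
    using y by (intro summable_bounded_weights_branch_density[where B = 1]) auto
  fix B :: nat
  have "(\<Sum>k<B. of_bool (prime (Suc k) \<and> N < Suc k) * branch_density (Suc k) y)
      \<le> (\<Sum>k<B. of_bool (prime (Suc k) \<and> N < Suc k) * (2 * gauss_density y / real (Suc k) ^ 2))"
  proof (intro sum_mono mult_left_mono)
    show "branch_density (Suc k) y \<le> 2 * gauss_density y / real (Suc k) ^ 2" for k
      by (rule branch_density_le[OF y]) simp
  qed simp
  also have "\<dots> = 2 * gauss_density y * (\<Sum>p\<in>{1..B}. if prime p \<and> N < p then 1 / real p ^ 2 else 0)"
    by (auto simp: sum.atLeast1_atMost_eq sum_distrib_left intro!: sum.cong)
  also have "\<dots> = 2 * gauss_density y * (\<Sum>p\<in>{p\<in>{1..B}. prime p \<and> N < p}. 1 / real p ^ 2)"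
    by (subst sum.inter_filter) simp_all
  also have "\<dots> \<le> 2 * gauss_density y * (\<Sum>p | prime p \<and> N < p \<and> p \<le> N * 2 ^ B. 1 / real p ^ 2)"
  proof (intro mult_left_mono sum_mono2)
    have "B \<le> 2 ^ B"
      using less_exp[of B] by simp
    also have "\<dots> \<le> N * 2 ^ B"
      using N by simp
    finally show "{p\<in>{1..B}. prime p \<and> N < p} \<subseteq> {p. prime p \<and> N < p \<and> p \<le> N * 2 ^ B}"
      by auto
  qed (use gauss_density_bounds[OF y] in \<open>auto intro: finite_subset[of _ "{..N * 2 ^ B}"]\<close>)
  also have "\<dots> \<le> 2 * gauss_density y * (4 * ln 2 / (real N * ln (real N)))"
  proof (intro mult_left_mono)
    have "0 \<le> 4 * ln 2 / (real N * ln (real N))"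
      using N by simp
    then show "(\<Sum>p | prime p \<and> N < p \<and> p \<le> N * 2 ^ B. 1 / real p ^ 2) \<le> 4 * ln 2 / (real N * ln (real N))"
      using sum_inverse_square_primes_le[OF N, of B] mult_left_le[of "1 - (1/2) ^ B"] by force
  qed (use gauss_density_bounds[OF y] in auto)
  finally show "(\<Sum>k<B. of_bool (prime (Suc k) \<and> N < Suc k) * branch_density (Suc k) y)
      \<le> 8 * ln 2 / (real N * ln (real N)) * gauss_density y"
    by (simp add: field_simps)
qed

definition truncated_prime :: "nat \<Rightarrow> nat \<Rightarrow> real" where
  "truncated_prime L k = (if prime k \<and> k \<le> L then real k else 0)"

definition prime_recip_sum :: "nat \<Rightarrow> real" where
  "prime_recip_sum L = (\<Sum>p | prime p \<and> p \<le> L. 1 / real p)"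

lemma prime_recip_sum_le:
  assumes "L \<le> 2 ^ Suc m" "m \<ge> 1"
  shows "prime_recip_sum L \<le> 5/2 + 2 * ln (real m)"
proof -
  have "prime_recip_sum L \<le> (\<Sum>p | prime p \<and> p \<le> 2 ^ Suc m. 1 / real p)"
    unfolding prime_recip_sum_def
    using assms(1) by (intro sum_mono2) (auto intro: finite_subset[of _ "{..2 ^ Suc m}"])
  also have "\<dots> \<le> 1/2 + 2 * harm m"
    by (rule sum_inverse_primes_le_harm)
  also have "harm m \<le> 1 + ln (real m)"
    using euler_mascheroni_sequence_decreasing[of 1 m] assms(2) by (simp add: harm_def)
  finally show ?thesis by simp
qed

lemma prime_recip_sum_eq: "prime_recip_sum L = (\<Sum>k<L. if prime (Suc k) then 1 / real (Suc k) else 0)"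
proof -
  have "prime_recip_sum L = (\<Sum>p\<in>{p\<in>{Suc 0..L}. prime p}. 1 / real p)"
    unfolding prime_recip_sum_def by (rule sum.cong) (use prime_ge_1_nat in auto)
  also have "\<dots> = (\<Sum>p\<in>{Suc 0..L}. if prime p then 1 / real p else 0)"
    by (rule sum.inter_filter) simp
  also have "\<dots> = (\<Sum>k<L. if prime (Suc k) then 1 / real (Suc k) else 0)"
    by (rule sum.atLeast1_atMost_eq)
  finally show ?thesis .
qed

lemma exp_truncated_prime_branch_density_le:
  assumes \<tau>: "0 < \<tau>" and y: "0 < y" "y < 1" and k: "k \<ge> 1"
  shows "(exp (\<tau> * truncated_prime L k) - 1) * branch_density k y
    \<le> 2 * \<tau> * exp (\<tau> * real L) * gauss_density y * (if prime k \<and> k \<le> L then 1 / real k else 0)"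
proof (cases "prime k \<and> k \<le> L")
  case True
  have "exp (\<tau> * real k) - 1 \<le> \<tau> * real k * exp (\<tau> * real k)"
    using exp_ge_add_one_self[of "- (\<tau> * real k)"] \<tau> by (simp add: exp_minus field_simps)
  also have "\<dots> \<le> \<tau> * real k * exp (\<tau> * real L)"
    using True \<tau> by (intro mult_left_mono) auto
  finally have "(exp (\<tau> * real k) - 1) * branch_density k y
      \<le> (\<tau> * real k * exp (\<tau> * real L)) * (2 * gauss_density y / real k ^ 2)"
    using branch_density_le[OF y k] branch_density_nonneg[of y k] y \<tau>
    by (intro mult_mono) auto
  then show ?thesis
    using True k by (simp add: truncated_prime_def power2_eq_square field_simps)
qed (auto simp: truncated_prime_def)

lemma suminf_exp_truncated_prime_branch_density_le:
  assumes \<tau>: "0 < \<tau>" and y: "0 < y" "y < 1"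
  shows "summable (\<lambda>k. exp (\<tau> * truncated_prime L (Suc k)) * branch_density (Suc k) y)"
    and "(\<Sum>k. exp (\<tau> * truncated_prime L (Suc k)) * branch_density (Suc k) y)
      \<le> exp (2 * \<tau> * exp (\<tau> * real L) * prime_recip_sum L) * gauss_density y"
proof -
  define r where "r k = (exp (\<tau> * truncated_prime L (Suc k)) - 1) * branch_density (Suc k) y" for k
  have "r k = 0" if "k \<notin> {..<L}" for k
    using that unfolding r_def truncated_prime_def by auto
  then have "r sums (\<Sum>k<L. r k)"
    by (intro sums_finite) auto
  moreover have "exp (\<tau> * truncated_prime L (Suc k)) * branch_density (Suc k) y = branch_density (Suc k) y + r k" for k
    unfolding r_def by (simp add: algebra_simps)
  ultimately have sums: "(\<lambda>k. exp (\<tau> * truncated_prime L (Suc k)) * branch_density (Suc k) y)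
      sums (gauss_density y + (\<Sum>k<L. r k))"
    using branch_density_sums y by (simp add: sums_add)
  then show "summable (\<lambda>k. exp (\<tau> * truncated_prime L (Suc k)) * branch_density (Suc k) y)"
    by (simp add: sums_iff)
  have "(\<Sum>k<L. r k) \<le> (\<Sum>k<L. 2 * \<tau> * exp (\<tau> * real L) * gauss_density y
      * (if prime (Suc k) \<and> Suc k \<le> L then 1 / real (Suc k) else 0))"
    unfolding r_def using \<tau> y by (intro sum_mono exp_truncated_prime_branch_density_le) auto
  also have "\<dots> = 2 * \<tau> * exp (\<tau> * real L) * prime_recip_sum L * gauss_density y"
    unfolding prime_recip_sum_eq sum_distrib_left sum_distrib_right
    by (intro sum.cong) (auto simp: mult_ac)
  finally have "(\<Sum>k. exp (\<tau> * truncated_prime L (Suc k)) * branch_density (Suc k) y)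
      \<le> (1 + 2 * \<tau> * exp (\<tau> * real L) * prime_recip_sum L) * gauss_density y"
    using sums by (simp add: sums_iff algebra_simps)
  also have "\<dots> \<le> exp (2 * \<tau> * exp (\<tau> * real L) * prime_recip_sum L) * gauss_density y"
    using exp_ge_add_one_self gauss_density_bounds[OF y] by (intro mult_right_mono) auto
  finally show "(\<Sum>k. exp (\<tau> * truncated_prime L (Suc k)) * branch_density (Suc k) y)
      \<le> exp (2 * \<tau> * exp (\<tau> * real L) * prime_recip_sum L) * gauss_density y" .
qed

lemma emeasure_large_truncated_prime_sum_le:
  assumes \<tau>: "0 < \<tau>"
  shows "emeasure lborel ({0<..<1} \<inter> {x. A \<le> (\<Sum>i<N. truncated_prime L (cf_digit (Suc i) x))})
    \<le> ennreal (2 * exp (- \<tau> * A + real N * (2 * \<tau> * exp (\<tau> * real L) * prime_recip_sum L)))"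
proof -
  define B where "B = 2 * \<tau> * exp (\<tau> * real L) * prime_recip_sum L"
  have "emeasure lborel ({0<..<1} \<inter> {x. A \<le> (\<Sum>i<N. truncated_prime L (cf_digit (Suc i) x))})
      \<le> ennreal (2 * exp (- \<tau> * A) * (\<Prod>i<N. exp B))"
  proof (rule emeasure_digit_event_le[where h = "\<lambda>i k. exp (\<tau> * truncated_prime L k)"])
    fix x assume "x \<in> {x. A \<le> (\<Sum>i<N. truncated_prime L (cf_digit (Suc i) x))}"
    then have S: "\<tau> * A \<le> \<tau> * (\<Sum>i<N. truncated_prime L (cf_digit (Suc i) x))"
      using \<tau> by (intro mult_left_mono) auto
    have "(\<Prod>i<N. exp (\<tau> * truncated_prime L (cf_digit (Suc i) x)))
        = exp (\<tau> * (\<Sum>i<N. truncated_prime L (cf_digit (Suc i) x)))"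
      by (simp add: exp_sum[symmetric] sum_distrib_left)
    then show "1 \<le> exp (- \<tau> * A) * (\<Prod>i<N. exp (\<tau> * truncated_prime L (cf_digit (Suc i) x)))"
      using S by (simp add: exp_add[symmetric])
  qed (use suminf_exp_truncated_prime_branch_density_le[OF \<tau>] in \<open>auto simp: B_def\<close>)
  also have "\<dots> = ennreal (2 * (exp (- \<tau> * A) * exp (real N * B)))"
    by (simp add: exp_of_nat_mult mult.assoc)
  also have "\<dots> = ennreal (2 * exp (- \<tau> * A + real N * B))"
    by (simp only: exp_add)
  finally show ?thesis
    unfolding B_def .
qed

lemma emeasure_large_prime_digit_le:
  assumes N: "N \<ge> 2"
  shows "emeasure lborel ({0<..<1} \<inter> {x. prime (cf_digit (Suc i) x) \<and> N < cf_digit (Suc i) x})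
    \<le> ennreal (16 * ln 2 / (real N * ln (real N)))"
proof -
  define C where "C = 8 * ln 2 / (real N * ln (real N))"
  define h where "h l k = (if l = i then of_bool (prime k \<and> N < k) else 1 :: real)" for l k :: nat
  define c where "c l = (if l = i then C else 1)" for l :: nat
  have prod_only_i: "(\<Prod>l<Suc i. f l) = f i" if "\<And>l. l \<noteq> i \<Longrightarrow> f l = 1" for f :: "nat \<Rightarrow> real"
    using that by (simp add: prod.neutral)
  have "emeasure lborel ({0<..<1} \<inter> {x. prime (cf_digit (Suc i) x) \<and> N < cf_digit (Suc i) x})
      \<le> ennreal (2 * 1 * (\<Prod>l<Suc i. c l))"
  proof (rule emeasure_digit_event_le[where h = h])
    fix l :: nat and y :: real assume y: "0 < y" "y < 1"
    show "summable (\<lambda>k. h l (Suc k) * branch_density (Suc k) y)"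
      using y by (intro summable_bounded_weights_branch_density[where B = 1]) (auto simp: h_def)
    show "(\<Sum>k. h l (Suc k) * branch_density (Suc k) y) \<le> c l * gauss_density y"
      using suminf_large_prime_branch_density_le[OF N y] branch_density_sums[of y] y
      by (cases "l = i") (auto simp: h_def c_def C_def sums_iff)
  qed (auto simp: h_def prod_only_i)
  also have "\<dots> = ennreal (16 * ln 2 / (real N * ln (real N)))"
    by (simp add: prod_only_i c_def C_def)
  finally show ?thesis .
qed

text \<open>On the dyadic block of the first \<open>2^(j+1)\<close> digits, prime digits above \<open>prime_cutoff s j\<close>
  are unlikely, the prime digits below it sum to at most \<open>8 * prime_cutoff s j\<close>, and the first
  \<open>2^j\<close> digits already sum to at least \<open>2^s\<close> times as much.\<close>
definition prime_cutoff :: "nat \<Rightarrow> nat \<Rightarrow> nat" where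
  "prime_cutoff s j = 2 ^ (j - 9 - s) * j"

definition small_sum_event :: "nat \<Rightarrow> real set" where
  "small_sum_event j = {0<..<1} \<inter> {x. (\<Sum>i<2 ^ j. real (cf_digit (Suc i) x)) < 2 ^ j * real j / 64}"

definition large_prime_sum_event :: "nat \<Rightarrow> nat \<Rightarrow> real set" where
  "large_prime_sum_event s j = {0<..<1} \<inter>
     {x. 8 * real (prime_cutoff s j) \<le> (\<Sum>i<2 ^ Suc j. truncated_prime (prime_cutoff s j) (cf_digit (Suc i) x))}"

definition large_prime_digit_event :: "nat \<Rightarrow> nat \<Rightarrow> real set" where
  "large_prime_digit_event s j = (\<Union>i<2 ^ Suc j. {0<..<1} \<inter>
     {x. prime (cf_digit (Suc i) x) \<and> prime_cutoff s j < cf_digit (Suc i) x})"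

definition bad_event :: "nat \<Rightarrow> nat \<Rightarrow> real set" where
  "bad_event s j = small_sum_event j \<union> large_prime_sum_event s j \<union> large_prime_digit_event s j"

lemma sets_block_events [measurable]:
  "small_sum_event j \<in> sets borel" "large_prime_sum_event s j \<in> sets borel"
  "large_prime_digit_event s j \<in> sets borel"
  unfolding small_sum_event_def large_prime_sum_event_def large_prime_digit_event_def
  by measurable

lemma sets_bad_event [measurable]: "bad_event s j \<in> sets borel"
  unfolding bad_event_def by measurable

lemma bad_event_subset: "bad_event s j \<subseteq> {0<..<1}"
  unfolding bad_event_def small_sum_event_def large_prime_sum_event_def large_prime_digit_event_def
  by auto

lemma eight_prime_cutoff_eq:
  assumes "j \<ge> 9 + s"
  shows "8 * real (prime_cutoff s j) = 2 ^ j * real j / 64 / 2 ^ s"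
proof -
  have "(2::real) ^ j = 2 ^ (j - 9 - s) * 2 ^ (9 + s)"
    using assms by (simp add: power_add[symmetric])
  then show ?thesis
    unfolding prime_cutoff_def by (simp add: power_add field_simps)
qed

lemma emeasure_small_sum_event_le: "emeasure lborel (small_sum_event j) \<le> ennreal (2 * exp (- real j / 50))"
proof -
  have "emeasure lborel (small_sum_event j) \<le> ennreal (2 * exp (2 ^ j * real j / 64 / real (2 ^ j) - harm (2 ^ j) / 18))"
    unfolding small_sum_event_def by (rule emeasure_small_digit_sum_le) simp
  also have "\<dots> \<le> ennreal (2 * exp (- real j / 50))"
  proof (intro ennreal_leI mult_left_mono)
    have "real j * (2/3) \<le> real j * ln 2"
      using ln2_ge_two_thirds by (intro mult_left_mono) auto
    also have "\<dots> = ln (real (2 ^ j))"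
      by (simp add: ln_realpow)
    also have "\<dots> \<le> ln (real (2 ^ j) + 1)"
      by (rule ln_mono) auto
    also have "\<dots> \<le> harm (2 ^ j)"
      by (rule ln_le_harm)
    finally show "exp (2 ^ j * real j / 64 / real (2 ^ j) - harm (2 ^ j) / 18) \<le> exp (- real j / 50)"
      by simp
  qed simp
  finally show ?thesis .
qed

lemma emeasure_large_prime_digit_event_le:
  assumes j: "j \<ge> 20 + 2 * s"
  shows "emeasure lborel (large_prime_digit_event s j) \<le> ennreal (2 ^ (15 + s) / real j ^ 2)"
proof -
  define L where "L = prime_cutoff s j"
  have "(2::nat) ^ (j - 9 - s) \<ge> 2"
    using j by (simp add: self_le_power)
  then have L: "real L \<ge> 2 ^ (j - 9 - s)" "L \<ge> 2"
    unfolding L_def prime_cutoff_def using j mult_le_mono[of 2 "2 ^ (j - 9 - s)" 1 j] by simp_all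
  have "emeasure lborel (large_prime_digit_event s j) \<le> (\<Sum>i<(2::nat) ^ Suc j. ennreal (16 * ln 2 / (real L * ln (real L))))"
    unfolding large_prime_digit_event_def L_def[symmetric]
    by (rule order_trans[OF emeasure_subadditive_finite sum_mono])
       (use emeasure_large_prime_digit_le[OF L(2)] in auto)
  also have "\<dots> = ennreal (2 ^ Suc j / real L * (16 * ln 2 / ln (real L)))"
    using L by (simp add: ennreal_of_nat_eq_real_of_nat ennreal_mult[symmetric] field_simps)
  also have "\<dots> \<le> ennreal (2 ^ (15 + s) / real j ^ 2)"
  proof (intro ennreal_leI)
    have "real j / 2 * ln 2 \<le> real (j - 9 - s) * ln 2"
      using j by (intro mult_right_mono) auto
    also have "\<dots> \<le> ln (real L)"
      using L by (subst ln_realpow[symmetric]) auto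
    finally have lnL: "real j / 2 * ln 2 \<le> ln (real L)" .
    have "(2::real) ^ (j - 9 - s) * 2 ^ (10 + s) = 2 ^ Suc j"
      using j by (simp add: power_add[symmetric])
    then have "2 ^ Suc j / real L = 2 ^ (10 + s) / real j"
      using j unfolding L_def prime_cutoff_def by (simp add: field_simps)
    moreover have "16 * ln 2 / ln (real L) \<le> 16 * ln 2 / (real j / 2 * ln 2)"
      using lnL j by (intro divide_left_mono) (auto intro!: mult_pos_pos order.strict_trans2[OF _ lnL])
    ultimately have "2 ^ Suc j / real L * (16 * ln 2 / ln (real L)) \<le> 2 ^ (10 + s) / real j * (16 * ln 2 / (real j / 2 * ln 2))"
      by (simp only:) (intro mult_left_mono, auto)
    also have "\<dots> = 2 ^ (15 + s) / real j ^ 2"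
      using j by (simp add: power_add power2_eq_square field_simps)
    finally show "2 ^ Suc j / real L * (16 * ln 2 / ln (real L)) \<le> 2 ^ (15 + s) / real j ^ 2" .
  qed
  finally show ?thesis .
qed

lemma prime_recip_sum_prime_cutoff_le:
  assumes "j \<ge> 1"
  shows "prime_recip_sum (prime_cutoff s j) \<le> 5/2 + 2 * ln (2 * real j)"
proof -
  have "prime_cutoff s j \<le> 2 ^ j * 2 ^ j"
    unfolding prime_cutoff_def using less_exp[of j] by (intro mult_le_mono power_increasing) auto
  moreover have "Suc (2 * j - 1) = j + j"
    using assms by simp
  ultimately have "prime_cutoff s j \<le> 2 ^ Suc (2 * j - 1)"
    by (simp only: power_add)
  then have "prime_recip_sum (prime_cutoff s j) \<le> 5/2 + 2 * ln (real (2 * j - 1))"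
    using assms by (intro prime_recip_sum_le) auto
  also have "ln (real (2 * j - 1)) \<le> ln (2 * real j)"
    using assms by (intro ln_mono) auto
  finally show ?thesis
    by simp
qed

text \<open>Chernoff bound with \<open>\<tau> = ln j / (4 L)\<close>: then \<open>exp (\<tau> L) = j^(1/4)\<close> and \<open>\<tau> * 8 L = 2 ln j\<close>.\<close>
lemma emeasure_large_prime_sum_event_le:
  assumes j: "j \<ge> 20 + 2 * s"
  shows "emeasure lborel (large_prime_sum_event s j) \<le> ennreal (2 * exp (- 2 * ln (real j)
    + 2 ^ (11 + s) * (ln (real j) * exp (ln (real j) / 4) * (5/2 + 2 * ln (2 * real j)) / real j) / 4))"
proof -
  define L where "L = prime_cutoff s j"
  define K where "K = ln (real j) / 4"
  define \<tau> where "\<tau> = K / real L"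
  have j2: "real j \<ge> 2"
    using j by simp
  have K: "K > 0"
    unfolding K_def using j2 by simp
  have L: "real L > 0"
    unfolding L_def prime_cutoff_def using j by simp
  have \<tau>: "0 < \<tau>" "\<tau> * real L = K" "\<tau> * (8 * real L) = 2 * ln (real j)"
    unfolding \<tau>_def using K L by (auto simp: K_def)
  have "emeasure lborel (large_prime_sum_event s j)
      \<le> ennreal (2 * exp (- \<tau> * (8 * real L) + real (2 ^ Suc j) * (2 * \<tau> * exp (\<tau> * real L) * prime_recip_sum L)))"
    unfolding large_prime_sum_event_def L_def[symmetric] by (rule emeasure_large_truncated_prime_sum_le[OF \<tau>(1)])
  also have "\<dots> \<le> ennreal (2 * exp (- 2 * ln (real j)
    + 2 ^ (11 + s) * (ln (real j) * exp (ln (real j) / 4) * (5/2 + 2 * ln (2 * real j)) / real j) / 4))"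
  proof (intro ennreal_leI mult_left_mono exp_mono add_mono)
    have "(2::real) ^ (j - 9 - s) * 2 ^ (11 + s) = 2 ^ Suc (Suc j)"
      using j by (simp add: power_add[symmetric])
    then have pow: "real (2 ^ Suc j) * 2 / real L = 2 ^ (11 + s) / real j"
      unfolding L_def prime_cutoff_def using j2 by (simp add: field_simps)
    have recip: "prime_recip_sum L \<le> 5/2 + 2 * ln (2 * real j)"
      unfolding L_def using j by (intro prime_recip_sum_prime_cutoff_le) simp
    have "real (2 ^ Suc j) * (2 * \<tau> * exp (\<tau> * real L) * prime_recip_sum L)
        = (real (2 ^ Suc j) * 2 / real L) * K * exp K * prime_recip_sum L"
      unfolding \<tau>(2) unfolding \<tau>_def by (simp add: field_simps)
    also have "\<dots> \<le> 2 ^ (11 + s) / real j * K * exp K * (5/2 + 2 * ln (2 * real j))"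
      unfolding pow using recip K j2 by (intro mult_left_mono) auto
    also have "\<dots> = 2 ^ (11 + s) * (ln (real j) * exp (ln (real j) / 4) * (5/2 + 2 * ln (2 * real j)) / real j) / 4"
      unfolding K_def by (simp add: field_simps)
    finally show "real (2 ^ Suc j) * (2 * \<tau> * exp (\<tau> * real L) * prime_recip_sum L)
        \<le> 2 ^ (11 + s) * (ln (real j) * exp (ln (real j) / 4) * (5/2 + 2 * ln (2 * real j)) / real j) / 4" .
  qed (use \<tau> in simp_all)
  finally show ?thesis .
qed

lemma eventually_emeasure_large_prime_sum_event_le:
  "eventually (\<lambda>j. emeasure lborel (large_prime_sum_event s j) \<le> ennreal (2 * exp 1 / real j ^ 2)) sequentially"
proof -
  have "(\<lambda>j::nat. ln (real j) * exp (ln (real j) / 4) * (5/2 + 2 * ln (2 * real j)) / real j) \<longlonglongrightarrow> 0"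
    by real_asymp
  then have "(\<lambda>j::nat. 2 ^ (11 + s) * (ln (real j) * exp (ln (real j) / 4) * (5/2 + 2 * ln (2 * real j)) / real j) / 4)
      \<longlonglongrightarrow> 2 ^ (11 + s) * 0 / 4"
    by (intro tendsto_intros) auto
  then have "eventually (\<lambda>j. 2 ^ (11 + s) * (ln (real j) * exp (ln (real j) / 4) * (5/2 + 2 * ln (2 * real j)) / real j) / 4 < 1)
      sequentially"
    by (intro order_tendstoD) auto
  with eventually_ge_at_top[of "20 + 2 * s"] show ?thesis
  proof eventually_elim
    case (elim j)
    then have "exp (- 2 * ln (real j) + 2 ^ (11 + s) * (ln (real j) * exp (ln (real j) / 4) * (5/2 + 2 * ln (2 * real j)) / real j) / 4)
        \<le> exp (- 2 * ln (real j) + 1)"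
      by (intro exp_mono) simp
    also have "\<dots> = exp 1 / real j ^ 2"
    proof -
      have "2 * ln (real j) = ln (real j ^ 2)"
        using elim(1) by (simp add: ln_realpow)
      then have "exp (2 * ln (real j)) = real j ^ 2"
        using elim(1) by simp
      then show ?thesis
        by (simp add: exp_diff)
    qed
    finally show ?case
      by (intro order_trans[OF emeasure_large_prime_sum_event_le[OF elim(1)]] ennreal_leI) simp
  qed
qed

lemma summable_measure_bad_event: "summable (\<lambda>j. measure lborel (bad_event s j))"
proof (rule summable_comparison_test_ev)
  show "eventually (\<lambda>j. norm (measure lborel (bad_event s j))
      \<le> 2 * exp (-1/50) ^ j + (2 * exp 1 + 2 ^ (15 + s)) * inverse (real j ^ 2)) sequentially"
    using eventually_emeasure_large_prime_sum_event_le[of s] eventually_ge_at_top[of "20 + 2 * s"]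
  proof eventually_elim
    case (elim j)
    have "emeasure lborel (bad_event s j)
        \<le> emeasure lborel (small_sum_event j \<union> large_prime_sum_event s j) + emeasure lborel (large_prime_digit_event s j)"
      unfolding bad_event_def by (rule emeasure_subadditive) auto
    also have "\<dots> \<le> emeasure lborel (small_sum_event j) + emeasure lborel (large_prime_sum_event s j)
          + emeasure lborel (large_prime_digit_event s j)"
      by (intro add_right_mono emeasure_subadditive) auto
    also have "\<dots> \<le> ennreal (2 * exp (- real j / 50)) + ennreal (2 * exp 1 / real j ^ 2) + ennreal (2 ^ (15 + s) / real j ^ 2)"
      using elim emeasure_large_prime_digit_event_le[of s j]
      by (intro add_mono emeasure_small_sum_event_le) auto
    also have "\<dots> = ennreal (2 * exp (- real j / 50) + 2 * exp 1 / real j ^ 2 + 2 ^ (15 + s) / real j ^ 2)"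
      by (simp add: ennreal_plus)
    finally have "measure lborel (bad_event s j) \<le> 2 * exp (- real j / 50) + 2 * exp 1 / real j ^ 2 + 2 ^ (15 + s) / real j ^ 2"
      unfolding measure_def by (intro enn2real_leI) auto
    moreover have "exp (- real j / 50) = exp (-1/50) ^ j"
      by (simp add: exp_of_nat_mult[symmetric])
    moreover have "2 * exp 1 / real j ^ 2 + 2 ^ (15 + s) / real j ^ 2 = (2 * exp 1 + 2 ^ (15 + s)) * inverse (real j ^ 2)"
      by (simp only: divide_inverse distrib_right)
    moreover have "norm (measure lborel (bad_event s j)) = measure lborel (bad_event s j)"
      by simp
    ultimately show ?case
      by linarith
  qed
  have "summable (\<lambda>j. exp (-1/50 :: real) ^ j)" "summable (\<lambda>j. inverse (real j ^ 2))"
    by (simp_all add: summable_geometric inverse_power_summable)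
  then show "summable (\<lambda>j. 2 * exp (-1/50) ^ j + (2 * exp 1 + 2 ^ (15 + s)) * inverse (real j ^ 2))"
    by (intro summable_add summable_mult)
qed

lemma AE_eventually_not_bad_event: "AE x in lborel. eventually (\<lambda>j. x \<notin> bad_event s j) sequentially"
proof -
  have "emeasure lborel (bad_event s j) < \<infinity>" for j
    using emeasure_mono[OF bad_event_subset, of lborel s j] by (simp add: le_less_trans)
  then show ?thesis
    using borel_cantelli_AE1[of "bad_event s" lborel] summable_measure_bad_event by simp
qed

text \<open>Outside the bad events, compare the first \<open>m\<close> digits with the dyadic blocks \<open>2^j \<le> m < 2^(j+1)\<close>.\<close>
lemma prime_digit_sum_le_if_not_bad:
  assumes x: "x \<in> {0<..<1}" and J: "J \<ge> 20 + 2 * s"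
    and good: "\<And>j. j \<ge> J \<Longrightarrow> x \<notin> bad_event s j" and m: "m \<ge> 2 ^ J"
  shows "(\<Sum>i<m. real (prime_cf_digit (Suc i) x)) \<le> (\<Sum>i<m. real (cf_digit (Suc i) x)) / 2 ^ s"
    and "0 < (\<Sum>i<m. real (cf_digit (Suc i) x))"
proof -
  define d where "d i = cf_digit (Suc i) x" for i
  have "0 < m"
    using m less_le_trans[of 0 "2 ^ J" m] by simp
  then obtain j where j: "2 ^ j \<le> m" "m < 2 ^ Suc j"
    using ex_power_ivl1[of 2 m] by auto
  have "2 ^ J < (2::nat) ^ Suc j"
    using j m by simp
  then have "J \<le> j"
    using power_less_imp_less_exp[of "2::nat" J "Suc j"] by simp
  then have good_j: "x \<notin> small_sum_event j" "x \<notin> large_prime_sum_event s j" "x \<notin> large_prime_digit_event s j"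
    using good unfolding bad_event_def by auto
  have "2 ^ j * real j / 64 \<le> (\<Sum>i<2 ^ j. real (d i))"
    using good_j(1) x unfolding small_sum_event_def d_def by auto
  also have "\<dots> \<le> (\<Sum>i<m. real (d i))"
    using j(1) by (intro sum_mono2) auto
  finally have S: "2 ^ j * real j / 64 \<le> (\<Sum>i<m. real (d i))" .
  moreover have "0 < 2 ^ j * real j / 64"
    using J \<open>J \<le> j\<close> by simp
  ultimately show "0 < (\<Sum>i<m. real (cf_digit (Suc i) x))"
    unfolding d_def by linarith
  have "(\<Sum>i<m. real (prime_cf_digit (Suc i) x)) \<le> (\<Sum>i<2 ^ Suc j. real (prime_cf_digit (Suc i) x))"
    using j(2) by (intro sum_mono2) auto
  also have "\<dots> = (\<Sum>i<2 ^ Suc j. truncated_prime (prime_cutoff s j) (d i))"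
  proof (rule sum.cong)
    fix i :: nat assume "i \<in> {..<2 ^ Suc j}"
    then have "\<not> (prime (d i) \<and> prime_cutoff s j < d i)"
      using good_j(3) x unfolding large_prime_digit_event_def d_def by auto
    then show "real (prime_cf_digit (Suc i) x) = truncated_prime (prime_cutoff s j) (d i)"
      unfolding prime_cf_digit_def truncated_prime_def d_def by auto
  qed simp
  also have "\<dots> < 8 * real (prime_cutoff s j)"
    using good_j(2) x unfolding large_prime_sum_event_def d_def by auto
  also have "\<dots> = 2 ^ j * real j / 64 / 2 ^ s"
    using J \<open>J \<le> j\<close> by (intro eight_prime_cutoff_eq) simp
  also have "\<dots> \<le> (\<Sum>i<m. real (d i)) / 2 ^ s"
    using S by (intro divide_right_mono) auto
  finally show "(\<Sum>i<m. real (prime_cf_digit (Suc i) x)) \<le> (\<Sum>i<m. real (cf_digit (Suc i) x)) / 2 ^ s"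
    unfolding d_def by simp
qed

lemma AE_eventually_prime_digit_sum_le:
  "AE x in lborel. x \<in> {0<..<1} \<longrightarrow> eventually (\<lambda>m.
      (\<Sum>i<m. real (prime_cf_digit (Suc i) x)) \<le> (\<Sum>i<m. real (cf_digit (Suc i) x)) / 2 ^ s
      \<and> 0 < (\<Sum>i<m. real (cf_digit (Suc i) x))) sequentially"
  using AE_eventually_not_bad_event[of s]
proof eventually_elim
  case (elim x)
  show ?case
  proof
    assume x: "x \<in> {0<..<1}"
    obtain J0 where J0: "\<And>j. j \<ge> J0 \<Longrightarrow> x \<notin> bad_event s j"
      using elim unfolding eventually_sequentially by auto
    define J where "J = max J0 (20 + 2 * s)"
    have "J \<ge> 20 + 2 * s" "\<And>j. j \<ge> J \<Longrightarrow> x \<notin> bad_event s j"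
      using J0 unfolding J_def by auto
    then show "eventually (\<lambda>m. (\<Sum>i<m. real (prime_cf_digit (Suc i) x)) \<le> (\<Sum>i<m. real (cf_digit (Suc i) x)) / 2 ^ s
        \<and> 0 < (\<Sum>i<m. real (cf_digit (Suc i) x))) sequentially"
      using prime_digit_sum_le_if_not_bad[OF x] unfolding eventually_sequentially by blast
  qed
qed

lemma LIMSEQ_divide_zero_if_eventually_le_divide_power:
  fixes P S :: "nat \<Rightarrow> real"
  assumes P: "\<And>m. 0 \<le> P m"
    and le: "\<And>s::nat. eventually (\<lambda>m. P m \<le> S m / 2 ^ s \<and> 0 < S m) sequentially"
  shows "(\<lambda>m. P m / S m) \<longlonglongrightarrow> 0"
proof (rule LIMSEQ_I)
  fix r :: real assume "0 < r"
  then obtain s :: nat where s: "(1/2) ^ s < r"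
    using real_arch_pow_inv[of r "1/2"] by auto
  have "eventually (\<lambda>m. norm (P m / S m - 0) < r) sequentially"
    using le[of s]
  proof eventually_elim
    case (elim m)
    then have "P m / S m \<le> (S m / 2 ^ s) / S m"
      by (intro divide_right_mono) auto
    also have "\<dots> = (1/2) ^ s"
      using elim by (simp add: power_one_over)
    finally show ?case
      using s P[of m] elim by simp
  qed
  then show "\<exists>no. \<forall>m\<ge>no. norm (P m / S m - 0) < r"
    unfolding eventually_sequentially .
qed

theorem theorem2p8:
  shows "AE x in lborel. x \<in> {0<..1} \<longrightarrow>
    ((\<lambda>n. real (\<Sum>k=1..n. prime_cf_digit k x) / real (\<Sum>k=1..n. cf_digit k x))
       \<longlonglongrightarrow> 0)"
proof -
  have "AE x in lborel. \<forall>s::nat. x \<in> {0<..<1} \<longrightarrow> eventually (\<lambda>m.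
      (\<Sum>i<m. real (prime_cf_digit (Suc i) x)) \<le> (\<Sum>i<m. real (cf_digit (Suc i) x)) / 2 ^ s
      \<and> 0 < (\<Sum>i<m. real (cf_digit (Suc i) x))) sequentially"
    by (subst AE_all_countable) (rule allI, rule AE_eventually_prime_digit_sum_le)
  moreover have "AE x in lborel. x \<noteq> 1"
    by (rule AE_lborel_singleton)
  ultimately show ?thesis
  proof eventually_elim
    case (elim x)
    have sum_shift: "real (\<Sum>k=1..n. f k) = (\<Sum>i<n. real (f (Suc i)))" for f :: "nat \<Rightarrow> nat" and n
      by (simp add: sum.atLeast1_atMost_eq)
    show ?case
      unfolding sum_shift
      using elim by (intro impI LIMSEQ_divide_zero_if_eventually_le_divide_power) (auto intro: sum_nonneg)
  qed
qed

end
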